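(* Let $\mathbb O=\mathbb C[[t]]$, $\mathbb K=\mathbb C((t))$. For integers $i,j\ge0$ and a polynomial $q\in t\mathbb C[t]$ put $T_{ij}(q)=\begin{pmatrix}1&t^{-i}&q(t^{-1})\\0&1&t^{-j}\\0&0&1\end{pmatrix}$. (a) Every double coset in $\mathbf{GL}(3,\mathbb O)\backslash\mathbf{GL}(3,\mathbb K)/\mathbf{Diag}(3,\mathbb K)$ contains a matrix of the form $T_{ij}(q)$. (b) If $T_{ij}(q_1)$ and $T_{kl}(q_2)$ lie in the same double coset, then $i=k$ and $j=l$. (c) $T_{ij}(q_1)$ and $T_{ij}(q_2)$ lie in the same double coset if and only if $q_2(t^{-1})=\big[y_1q_1(t^{-1})+(y_2-y_1)t^{-i-j}\big]$ for some $y_1,y_2\in\mathbb O^\times$ with $y_2\equiv1\pmod{t^j}$ and $y_2\equiv y_1\pmod{t^i}$.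
   Context: $\mathbf{Diag}(3,\mathbb K)$ is the group of invertible diagonal matrices. For $f=\sum_{s\ge-N}a_st^s\in\mathbb K$, $[f]:=\sum_{s=-N}^{-1}a_st^s$ denotes its principal part (the terms of negative degree). $\mathbb O^\times$ is the unit group of $\mathbb O$. *)

theory Defs
  imports "HOL-Computational_Algebra.Formal_Laurent_Series"
          "Jordan_Normal_Form.Matrix"
begin

text \<open>K = C((t)) is the type complex fls; t is fls_X. Matrices are Jordan_Normal_Form
  matrices (3 x 3, indices 0,1,2).\<close>

definition in_O :: "complex fls \<Rightarrow> bool" where
  "in_O f \<longleftrightarrow> f = 0 \<or> fls_subdegree f \<ge> 0"

definition unit_O :: "complex fls \<Rightarrow> bool" where
  "unit_O f \<longleftrightarrow> in_O f \<and> (\<exists>g. in_O g \<and> f * g = 1)"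

definition cong_O :: "complex fls \<Rightarrow> complex fls \<Rightarrow> nat \<Rightarrow> bool" where
  "cong_O a b n \<longleftrightarrow> (\<exists>z. in_O z \<and> a - b = fls_X ^ n * z)"

definition GL3K :: "complex fls mat set" where
  "GL3K = {A. A \<in> carrier_mat 3 3 \<and> invertible_mat A}"

definition GL3O :: "complex fls mat set" where
  "GL3O = {A. A \<in> carrier_mat 3 3 \<and> (\<forall>i<3. \<forall>j<3. in_O (A $$ (i,j))) \<and>
     (\<exists>B. B \<in> carrier_mat 3 3 \<and> (\<forall>i<3. \<forall>j<3. in_O (B $$ (i,j))) \<and>
          A * B = 1\<^sub>m 3 \<and> B * A = 1\<^sub>m 3)}"

definition Diag3K :: "complex fls mat set" where
  "Diag3K = {D. D \<in> carrier_mat 3 3 \<and> (\<forall>i<3. \<forall>j<3. i \<noteq> j \<longrightarrow> D $$ (i,j) = 0) \<and>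
     (\<forall>i<3. D $$ (i,i) \<noteq> 0)}"

definition same_dcoset :: "complex fls mat \<Rightarrow> complex fls mat \<Rightarrow> bool" where
  "same_dcoset A B \<longleftrightarrow> (\<exists>g d. g \<in> GL3O \<and> d \<in> Diag3K \<and> B = g * A * d)"

definition in_tCt :: "complex poly \<Rightarrow> bool" where
  "in_tCt q \<longleftrightarrow> coeff q 0 = 0"

definition eval_tinv :: "complex poly \<Rightarrow> complex fls" where
  "eval_tinv q = (\<Sum>n\<le>degree q. fls_const (coeff q n) * fls_X_inv ^ n)"

text \<open>principal part [f]: the terms of negative degree (fls_prpart f is the polynomial
  p with p(t^{-1}) = [f])\<close>
definition principal_part :: "complex fls \<Rightarrow> complex fls" where
  "principal_part f = eval_tinv (fls_prpart f)"

definition T :: "nat \<Rightarrow> nat \<Rightarrow> complex poly \<Rightarrow> complex fls mat" where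
  "T i j q = mat_of_rows_list 3
     [[1, fls_X_inv ^ i, eval_tinv q],
      [0, 1, fls_X_inv ^ j],
      [0, 0, 1]]"

end

theory Submission
  imports Defs "Jordan_Normal_Form.Determinant"
begin

text \<open>Since O is a valuation ring, Gaussian elimination by row operations in GL(3,O), always
  pivoting on the entry of least order, makes every invertible matrix upper triangular, and a
  diagonal matrix on the right then makes it unitriangular. For unitriangular matrices the double
  coset relation is explicit: G U D = U' forces G to be upper triangular with unit diagonal
  (d0, d1, d2) and D = diag(1/d0, 1/d1, 1/d2), so the relation says that three entries of G lie in O.
  This description lets one normalise the superdiagonal entries to t^-i and t^-j and the corner to a
  principal part (a), shows that i and j are the pole orders of the superdiagonal entries (b), and
  gives (c) after rescaling by y1 = d0/d2, y2 = d1/d2.\<close>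

definition mat3 :: "'a \<Rightarrow> 'a \<Rightarrow> 'a \<Rightarrow> 'a \<Rightarrow> 'a \<Rightarrow> 'a \<Rightarrow> 'a \<Rightarrow> 'a \<Rightarrow> 'a \<Rightarrow> 'a mat" where
  "mat3 a b c d e f g h k = mat_of_rows_list 3 [[a, b, c], [d, e, f], [g, h, k]]"

lemma less_3_cases: "(i::nat) < 3 \<longleftrightarrow> i = 0 \<or> i = 1 \<or> i = 2"
  by auto

lemma mat3_carrier [simp]: "mat3 a b c d e f g h k \<in> carrier_mat 3 3"
  and dim_row_mat3 [simp]: "dim_row (mat3 a b c d e f g h k) = 3"
  and dim_col_mat3 [simp]: "dim_col (mat3 a b c d e f g h k) = 3"
  by (auto simp: mat3_def mat_of_rows_list_def)

lemma index_mat3: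
  "i < 3 \<Longrightarrow> j < 3 \<Longrightarrow> mat3 a b c d e f g h k $$ (i, j) = [[a, b, c], [d, e, f], [g, h, k]] ! i ! j"
  by (auto simp: mat3_def mat_of_rows_list_def)

lemma index_mat3_simps [simp]:
  "mat3 a b c d e f g h k $$ (0, 0) = a" "mat3 a b c d e f g h k $$ (0, 1) = b"
  "mat3 a b c d e f g h k $$ (0, 2) = c" "mat3 a b c d e f g h k $$ (1, 0) = d"
  "mat3 a b c d e f g h k $$ (1, 1) = e" "mat3 a b c d e f g h k $$ (1, 2) = f"
  "mat3 a b c d e f g h k $$ (2, 0) = g" "mat3 a b c d e f g h k $$ (2, 1) = h"
  "mat3 a b c d e f g h k $$ (2, 2) = k"
  by (simp_all add: index_mat3)

lemma mat3_eq_iff: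
  "mat3 a b c d e f g h k = mat3 a' b' c' d' e' f' g' h' k' \<longleftrightarrow>
    a = a' \<and> b = b' \<and> c = c' \<and> d = d' \<and> e = e' \<and> f = f' \<and> g = g' \<and> h = h' \<and> k = k'"
  by (metis index_mat3_simps)

lemma carrier_mat_3_3E:
  assumes "A \<in> carrier_mat 3 3"
  obtains a b c d e f g h k where "A = mat3 a b c d e f g h k"
proof
  show "A = mat3 (A $$ (0, 0)) (A $$ (0, 1)) (A $$ (0, 2)) (A $$ (1, 0)) (A $$ (1, 1))
                 (A $$ (1, 2)) (A $$ (2, 0)) (A $$ (2, 1)) (A $$ (2, 2))"
    using assms by (intro eq_matI) (auto simp: less_3_cases index_mat3)
qed

lemma one_mat_3: "(1\<^sub>m 3 :: 'a::{zero,one} mat) = mat3 1 0 0 0 1 0 0 0 1"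
  by (rule eq_matI) (auto simp: less_3_cases index_mat3)

lemma mat3_mult:
  "mat3 a b c d e f g h k * mat3 a' b' c' d' e' f' g' h' k' =
    mat3 (a*a' + b*d' + c*g') (a*b' + b*e' + c*h') (a*c' + b*f' + c*k')
         (d*a' + e*d' + f*g') (d*b' + e*e' + f*h') (d*c' + e*f' + f*k')
         (g*a' + h*d' + k*g') (g*b' + h*e' + k*h') (g*c' + h*f' + k*k')"
  (is "?L = ?R")
proof (rule eq_matI)
  fix i j assume "i < dim_row ?R" "j < dim_col ?R"
  then have "i = 0 \<or> i = 1 \<or> i = 2" "j = 0 \<or> j = 1 \<or> j = 2" by auto
  then show "?L $$ (i, j) = ?R $$ (i, j)"
    by (auto simp: index_mult_mat scalar_prod_def numeral_3_eq_3 row_def col_def index_mat3)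
qed auto

lemma mult_assoc_3:
  "A \<in> carrier_mat 3 3 \<Longrightarrow> B \<in> carrier_mat 3 3 \<Longrightarrow> C \<in> carrier_mat 3 3 \<Longrightarrow>
    A * B * C = A * (B * (C :: 'a::semiring_0 mat))"
  by (rule assoc_mult_mat)

lemma det_mat3_upper_triangular: "det (mat3 a b c 0 e f 0 0 k) = a * e * k"
proof -
  have "upper_triangular (mat3 a b c 0 e f 0 0 k)"
    unfolding upper_triangular_def
  proof (intro allI impI)
    fix i j :: nat assume "i < dim_row (mat3 a b c 0 e f 0 0 k)" "j < i"
    then have "(i, j) \<in> {(1, 0), (2, 0), (2, 1)}" by auto
    then show "mat3 a b c 0 e f 0 0 k $$ (i, j) = 0" by (auto simp: index_mat3)
  qed
  then show ?thesis
    by (simp add: det_upper_triangular[OF _ mat3_carrier] diag_mat_def numeral_3_eq_3 index_mat3 mult.assoc)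
qed

lemma det_nonzero_if_right_inverse:
  fixes A :: "'a::comm_ring_1 mat"
  assumes "A \<in> carrier_mat n n" "B \<in> carrier_mat n n" "A * B = 1\<^sub>m n"
  shows "det A \<noteq> 0"
  using det_mult[OF assms(1,2)] assms(3) by auto

lemma in_O_iff_nth: "in_O f \<longleftrightarrow> (\<forall>n<0. fls_nth f n = 0)"
  unfolding in_O_def using fls_subdegree_ge0I by (auto simp: fls_eq0_below_subdegree)

lemma in_O_0 [simp]: "in_O 0"
  and in_O_1 [simp]: "in_O 1"
  by (simp_all add: in_O_def)

lemma in_O_add [intro]: "in_O f \<Longrightarrow> in_O g \<Longrightarrow> in_O (f + g)"
  and in_O_diff [intro]: "in_O f \<Longrightarrow> in_O g \<Longrightarrow> in_O (f - g)"
  by (auto simp: in_O_iff_nth)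

lemma in_O_uminus_iff [simp]: "in_O (- f) \<longleftrightarrow> in_O f"
  by (auto simp: in_O_iff_nth)

lemma in_O_mult [intro]: "in_O f \<Longrightarrow> in_O g \<Longrightarrow> in_O (f * g)"
  unfolding in_O_def by (cases "f = 0"; cases "g = 0") auto

lemma unit_O_iff_subdegree: "unit_O f \<longleftrightarrow> f \<noteq> 0 \<and> fls_subdegree f = 0"
proof
  assume "unit_O f"
  then obtain g where g: "in_O f" "in_O g" "f * g = 1"
    unfolding unit_O_def by auto
  then have "f \<noteq> 0" "g \<noteq> 0"
    by auto
  then have "fls_subdegree f + fls_subdegree g = 0"
    using g(3) fls_subdegree_mult[of f g] by simp
  with g show "f \<noteq> 0 \<and> fls_subdegree f = 0"
    unfolding in_O_def by auto
next
  assume "f \<noteq> 0 \<and> fls_subdegree f = 0"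
  then show "unit_O f"
    unfolding unit_O_def in_O_def by (intro conjI exI[of _ "inverse f"]) auto
qed

lemma unit_O_imp_in_O: "unit_O f \<Longrightarrow> in_O f"
  by (simp add: unit_O_def)

lemma unit_O_imp_nonzero: "unit_O f \<Longrightarrow> f \<noteq> 0"
  by (simp add: unit_O_iff_subdegree)

lemma unit_O_1 [simp]: "unit_O 1"
  and unit_O_mult [intro]: "unit_O f \<Longrightarrow> unit_O g \<Longrightarrow> unit_O (f * g)"
  and unit_O_divide [intro]: "unit_O f \<Longrightarrow> unit_O g \<Longrightarrow> unit_O (f / g)"
  by (auto simp: unit_O_iff_subdegree fls_divide_subdegree)

lemma unit_O_uminus_iff [simp]: "unit_O (- f) \<longleftrightarrow> unit_O f"
  by (simp add: unit_O_iff_subdegree)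

lemma unit_O_if_mult_eq_1: "in_O f \<Longrightarrow> in_O g \<Longrightarrow> f * g = 1 \<Longrightarrow> unit_O f"
  by (auto simp: unit_O_def)

lemma in_O_divide_unit [intro]: "in_O f \<Longrightarrow> unit_O g \<Longrightarrow> in_O (f / g)"
  by (metis unit_O_divide unit_O_1 unit_O_imp_in_O divide_inverse in_O_mult inverse_eq_divide)

lemma in_O_mult_unit_iff: "unit_O u \<Longrightarrow> in_O (f * u) \<longleftrightarrow> in_O f"
  using in_O_divide_unit[of "f * u" u] unit_O_imp_nonzero[of u]
  by (auto simp: unit_O_imp_in_O)

lemma fls_X_power_mult_X_inv_power: "(fls_X :: 'a::field fls) ^ n * fls_X_inv ^ n = 1"
  by (rule fls_eqI) (simp add: fls_X_inv_power_times_conv_shift)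

lemma cong_O_iff: "cong_O f g n \<longleftrightarrow> in_O (fls_X_inv ^ n * (f - g))"
proof -
  have "f - g = fls_X ^ n * z \<longleftrightarrow> fls_X_inv ^ n * (f - g) = z" for z
    using fls_X_power_mult_X_inv_power[of n]
    by (metis (no_types, lifting) mult.assoc mult.commute mult_1)
  then show ?thesis
    unfolding cong_O_def by auto
qed

lemma in_O_divide_if_subdegree_le:
  "x \<noteq> 0 \<Longrightarrow> y = 0 \<or> fls_subdegree x \<le> fls_subdegree y \<Longrightarrow> in_O (y / x)"
  unfolding in_O_def by (cases "y = 0") (auto simp: fls_divide_subdegree)

lemma valuation_ring_row_elimination:
  obtains p q r s
  where "in_O p" "in_O q" "in_O r" "in_O s" "unit_O (p * s - q * r)" "r * x + s * y = 0"
proof (cases "y \<noteq> 0 \<and> (x = 0 \<or> fls_subdegree y \<le> fls_subdegree x)")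
  case True
  then have "in_O (x / y)"
    by (intro in_O_divide_if_subdegree_le) auto
  with True show ?thesis
    using that[of 0 1 1 "- (x / y)"] by auto
next
  case False
  then have "x = 0 \<and> y = 0 \<or> x \<noteq> 0 \<and> in_O (y / x)"
    by (auto intro: in_O_divide_if_subdegree_le)
  then show ?thesis
    using that[of 1 0 "- (y / x)" 1] by auto
qed

lemma exists_X_inv_power_times_unit_mod_O: "\<exists>j z. unit_O z \<and> in_O (fls_X_inv ^ j * z - w)"
proof (cases "in_O w")
  case True
  then show ?thesis
    by (intro exI[of _ 0] exI[of _ 1]) auto
next
  case False
  define j where "j = nat (- fls_subdegree w)"
  have "w \<noteq> 0" "fls_subdegree w < 0"
    using False unfolding in_O_def by auto
  then have "unit_O (fls_X ^ j * w)"
    by (simp add: unit_O_iff_subdegree j_def)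
  moreover have "fls_X_inv ^ j * (fls_X ^ j * w) = w"
    by (metis fls_X_power_mult_X_inv_power mult.assoc mult.commute mult_1)
  ultimately show ?thesis
    by (metis diff_self in_O_0)
qed

lemma X_inv_power_times_unit_mod_O_unique:
  assumes "unit_O u" "unit_O v" "in_O (fls_X_inv ^ k * u - fls_X_inv ^ i * v)"
  shows "i = k"
proof (rule ccontr)
  assume "i \<noteq> k"
  have nonzero: "fls_X_inv ^ k * u \<noteq> 0" "fls_X_inv ^ i * v \<noteq> 0"
    and subdegree: "fls_subdegree (fls_X_inv ^ k * u) = - int k"
      "fls_subdegree (fls_X_inv ^ i * v) = - int i"
    using assms(1,2) by (auto simp: unit_O_iff_subdegree)
  have "fls_subdegree (fls_X_inv ^ k * u - fls_X_inv ^ i * v) = - int (max i k)"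
  proof (cases "i < k")
    case True
    then show ?thesis
      using fls_subdegree_diff_eq1[OF nonzero(1)] subdegree by simp
  next
    case False
    then show ?thesis
      using fls_subdegree_diff_eq2[OF nonzero(2)] subdegree \<open>i \<noteq> k\<close> by simp
  qed
  moreover have "max i k > 0"
    using \<open>i \<noteq> k\<close> by auto
  ultimately show False
    using assms(3) unfolding in_O_def by auto
qed

lemma nth_eval_tinv: "fls_nth (eval_tinv q) n = (if n \<le> 0 then coeff q (nat (- n)) else 0)"
proof -
  have "fls_nth (eval_tinv q) n = (\<Sum>m\<le>degree q. coeff q m * (if n = - int m then 1 else 0))"
    by (simp add: eval_tinv_def fls_nth_sum)
  also have "\<dots> = (\<Sum>m\<in>{..degree q} \<inter> {nat (- n)}. if n \<le> 0 then coeff q m else 0)"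
    by (rule sum.mono_neutral_cong_right) (auto split: if_splits)
  also have "\<dots> = (if n \<le> 0 then coeff q (nat (- n)) else 0)"
    by (cases "nat (- n) \<le> degree q") (auto simp: coeff_eq_0)
  finally show ?thesis .
qed

lemma in_tCt_fls_prpart: "in_tCt (fls_prpart f)"
  by (simp add: in_tCt_def)

lemma in_O_diff_principal_part: "in_O (f - principal_part f)"
  by (simp add: in_O_iff_nth principal_part_def nth_eval_tinv)

lemma eval_tinv_eq_principal_part_iff:
  assumes "in_tCt q"
  shows "eval_tinv q = principal_part f \<longleftrightarrow> in_O (eval_tinv q - f)"
proof
  assume "eval_tinv q = principal_part f"
  then show "in_O (eval_tinv q - f)"
    using in_O_diff_principal_part[of f] in_O_uminus_iff by (metis minus_diff_eq)
next
  assume "in_O (eval_tinv q - f)"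
  then show "eval_tinv q = principal_part f"
    using assms by (intro fls_eqI) (auto simp: in_O_iff_nth principal_part_def nth_eval_tinv in_tCt_def)
qed

definition O_entries :: "complex fls mat \<Rightarrow> bool" where
  "O_entries A \<longleftrightarrow> (\<forall>i<3. \<forall>j<3. in_O (A $$ (i, j)))"

lemma O_entries_mat3 [simp]:
  "O_entries (mat3 a b c d e f g h k) \<longleftrightarrow>
    in_O a \<and> in_O b \<and> in_O c \<and> in_O d \<and> in_O e \<and> in_O f \<and> in_O g \<and> in_O h \<and> in_O k"
  unfolding O_entries_def less_3_cases by (auto simp: index_mat3)

lemma O_entries_mult:
  assumes "A \<in> carrier_mat 3 3" "B \<in> carrier_mat 3 3" "O_entries A" "O_entries B"
  shows "O_entries (A * B)"
proof -
  obtain a b c d e f g h k where A: "A = mat3 a b c d e f g h k"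
    using assms(1) by (rule carrier_mat_3_3E)
  obtain a' b' c' d' e' f' g' h' k' where B: "B = mat3 a' b' c' d' e' f' g' h' k'"
    using assms(2) by (rule carrier_mat_3_3E)
  show ?thesis
    using assms(3,4) unfolding A B mat3_mult by (simp add: in_O_add in_O_mult)
qed

lemma GL3O_iff:
  "G \<in> GL3O \<longleftrightarrow> G \<in> carrier_mat 3 3 \<and> O_entries G \<and>
    (\<exists>H. H \<in> carrier_mat 3 3 \<and> O_entries H \<and> G * H = 1\<^sub>m 3 \<and> H * G = 1\<^sub>m 3)"
  unfolding GL3O_def O_entries_def by auto

lemma GL3O_carrier: "G \<in> GL3O \<Longrightarrow> G \<in> carrier_mat 3 3"
  by (simp add: GL3O_def)

lemma one_in_GL3O: "1\<^sub>m 3 \<in> GL3O"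
  unfolding GL3O_iff one_mat_3 by (intro conjI exI[of _ "mat3 1 0 0 0 1 0 0 0 1"]) (auto simp: mat3_mult)

lemma mat3_in_GL3O:
  assumes "in_O a" "in_O b" "in_O c" "in_O d" "in_O e" "in_O f" "in_O g" "in_O h" "in_O k"
    and "unit_O (a * (e * k - f * h) - b * (d * k - f * g) + c * (d * h - e * g))"
  shows "mat3 a b c d e f g h k \<in> GL3O"
proof -
  define \<epsilon> where "\<epsilon> = inverse (a * (e * k - f * h) - b * (d * k - f * g) + c * (d * h - e * g))"
  have det_\<epsilon>: "(a * (e * k - f * h) - b * (d * k - f * g) + c * (d * h - e * g)) * \<epsilon> = 1"
    using unit_O_imp_nonzero[OF assms(10)] unfolding \<epsilon>_def by simp
  have "in_O \<epsilon>"
    using in_O_divide_unit[OF in_O_1 assms(10)] unfolding \<epsilon>_def by (simp add: inverse_eq_divide)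
  define H where "H = mat3
    ((e * k - f * h) * \<epsilon>) ((c * h - b * k) * \<epsilon>) ((b * f - c * e) * \<epsilon>)
    ((f * g - d * k) * \<epsilon>) ((a * k - c * g) * \<epsilon>) ((c * d - a * f) * \<epsilon>)
    ((d * h - e * g) * \<epsilon>) ((b * g - a * h) * \<epsilon>) ((a * e - b * d) * \<epsilon>)"
  have "O_entries H"
    using assms(1-9) \<open>in_O \<epsilon>\<close> unfolding H_def by (simp add: in_O_mult in_O_diff)
  moreover have "mat3 a b c d e f g h k * H = 1\<^sub>m 3" "H * mat3 a b c d e f g h k = 1\<^sub>m 3"
    unfolding H_def mat3_mult one_mat_3 mat3_eq_iff
    by (intro conjI; ((rule trans[OF _ det_\<epsilon>], simp add: algebra_simps) | simp add: algebra_simps))+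
  ultimately show ?thesis
    using assms(1-9) unfolding GL3O_iff by (intro conjI exI[of _ H]) (auto simp: H_def)
qed

lemma GL3O_mult:
  assumes "G \<in> GL3O" "G' \<in> GL3O"
  shows "G * G' \<in> GL3O"
proof -
  obtain H where G: "G \<in> carrier_mat 3 3" "O_entries G"
    and H: "H \<in> carrier_mat 3 3" "O_entries H" "G * H = 1\<^sub>m 3" "H * G = 1\<^sub>m 3"
    using assms(1) unfolding GL3O_iff by auto
  obtain H' where G': "G' \<in> carrier_mat 3 3" "O_entries G'"
    and H': "H' \<in> carrier_mat 3 3" "O_entries H'" "G' * H' = 1\<^sub>m 3" "H' * G' = 1\<^sub>m 3"
    using assms(2) unfolding GL3O_iff by auto
  have "G * G' * (H' * H) = G * (G' * H') * H"
    using G(1) G'(1) H(1) H'(1) by (simp add: mult_assoc_3)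
  moreover have "H' * H * (G * G') = H' * (H * G) * G'"
    using G(1) G'(1) H(1) H'(1) by (simp add: mult_assoc_3)
  ultimately have "G * G' * (H' * H) = 1\<^sub>m 3" "H' * H * (G * G') = 1\<^sub>m 3"
    using G G' H H' by simp_all
  then show ?thesis
    unfolding GL3O_iff using G G' H H' by (intro conjI exI[of _ "H' * H"] O_entries_mult) auto
qed

lemma Diag3K_iff: "D \<in> Diag3K \<longleftrightarrow> (\<exists>x y z. x \<noteq> 0 \<and> y \<noteq> 0 \<and> z \<noteq> 0 \<and> D = mat3 x 0 0 0 y 0 0 0 z)"
proof
  assume D: "D \<in> Diag3K"
  then have "D = mat3 (D $$ (0, 0)) 0 0 0 (D $$ (1, 1)) 0 0 0 (D $$ (2, 2))"
    unfolding Diag3K_def by (intro eq_matI) (auto simp: less_3_cases index_mat3)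
  moreover have "D $$ (0, 0) \<noteq> 0" "D $$ (1, 1) \<noteq> 0" "D $$ (2, 2) \<noteq> 0"
    using D unfolding Diag3K_def by auto
  ultimately show "\<exists>x y z. x \<noteq> 0 \<and> y \<noteq> 0 \<and> z \<noteq> 0 \<and> D = mat3 x 0 0 0 y 0 0 0 z"
    by blast
next
  assume "\<exists>x y z. x \<noteq> 0 \<and> y \<noteq> 0 \<and> z \<noteq> 0 \<and> D = mat3 x 0 0 0 y 0 0 0 z"
  then show "D \<in> Diag3K"
    unfolding Diag3K_def less_3_cases by (auto simp: index_mat3)
qed

lemma mat3_diag_in_Diag3K: "x \<noteq> 0 \<Longrightarrow> y \<noteq> 0 \<Longrightarrow> z \<noteq> 0 \<Longrightarrow> mat3 x 0 0 0 y 0 0 0 z \<in> Diag3K"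
  unfolding Diag3K_iff by blast

lemma Diag3K_mult: "D \<in> Diag3K \<Longrightarrow> D' \<in> Diag3K \<Longrightarrow> D * D' \<in> Diag3K"
  unfolding Diag3K_iff by (auto simp: mat3_mult mat3_eq_iff)

lemma same_dcoset_trans:
  assumes "A \<in> carrier_mat 3 3" "same_dcoset A B" "same_dcoset B C"
  shows "same_dcoset A C"
proof -
  obtain G D where GD: "G \<in> GL3O" "D \<in> Diag3K" "B = G * A * D"
    using assms(2) unfolding same_dcoset_def by auto
  obtain G' D' where GD': "G' \<in> GL3O" "D' \<in> Diag3K" "C = G' * B * D'"
    using assms(3) unfolding same_dcoset_def by auto
  have "G \<in> carrier_mat 3 3" "G' \<in> carrier_mat 3 3" "D \<in> carrier_mat 3 3" "D' \<in> carrier_mat 3 3"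
    using GD GD' by (simp_all add: GL3O_carrier Diag3K_def)
  then have "C = (G' * G) * A * (D * D')"
    using GD(3) GD'(3) assms(1) by (simp add: mult_assoc_3)
  then show ?thesis
    unfolding same_dcoset_def using GD GD' GL3O_mult Diag3K_mult by blast
qed

lemma one_in_Diag3K: "1\<^sub>m 3 \<in> Diag3K"
  unfolding one_mat_3 by (simp add: mat3_diag_in_Diag3K)

lemma same_dcoset_mult_left: "A \<in> carrier_mat 3 3 \<Longrightarrow> G \<in> GL3O \<Longrightarrow> same_dcoset A (G * A)"
  unfolding same_dcoset_def using one_in_Diag3K
  by (intro exI[of _ G] exI[of _ "1\<^sub>m 3"]) (simp add: GL3O_carrier)

lemma same_dcoset_mult_right: "A \<in> carrier_mat 3 3 \<Longrightarrow> D \<in> Diag3K \<Longrightarrow> same_dcoset A (A * D)"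
  unfolding same_dcoset_def using one_in_GL3O
  by (intro exI[of _ "1\<^sub>m 3"] exI[of _ D]) simp

lemma same_dcoset_det_nonzero:
  assumes "A \<in> carrier_mat 3 3" "det A \<noteq> 0" "same_dcoset A B"
  shows "det B \<noteq> 0"
proof -
  obtain G D where GD: "G \<in> GL3O" "D \<in> Diag3K" "B = G * A * D"
    using assms(3) unfolding same_dcoset_def by auto
  obtain H where "G \<in> carrier_mat 3 3" "H \<in> carrier_mat 3 3" "G * H = 1\<^sub>m 3"
    using GD(1) unfolding GL3O_iff by auto
  then have "det G \<noteq> 0"
    by (rule det_nonzero_if_right_inverse)
  moreover obtain x y z where "x \<noteq> 0" "y \<noteq> 0" "z \<noteq> 0" "D = mat3 x 0 0 0 y 0 0 0 z"
    using GD(2) unfolding Diag3K_iff by auto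
  then have "det D \<noteq> 0"
    by (simp add: det_mat3_upper_triangular)
  ultimately show ?thesis
    using GD assms(1,2) \<open>G \<in> carrier_mat 3 3\<close> by (simp add: det_mult[of _ 3] Diag3K_def)
qed

lemma same_dcoset_clear_20:
  "\<exists>d' e' f' h' k'. same_dcoset (mat3 a b c d e f g h k) (mat3 a b c d' e' f' 0 h' k')"
proof -
  obtain p q r s where pqrs: "in_O p" "in_O q" "in_O r" "in_O s" "unit_O (p * s - q * r)" "r * d + s * g = 0"
    by (rule valuation_ring_row_elimination)
  then have "mat3 1 0 0 0 p q 0 r s \<in> GL3O"
    by (intro mat3_in_GL3O) auto
  then have "same_dcoset (mat3 a b c d e f g h k) (mat3 1 0 0 0 p q 0 r s * mat3 a b c d e f g h k)"
    by (rule same_dcoset_mult_left[OF mat3_carrier])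
  then show ?thesis
    using pqrs(6) by (simp add: mat3_mult) blast
qed

lemma same_dcoset_clear_10:
  "\<exists>a' b' c' e' f'. same_dcoset (mat3 a b c d e f 0 h k) (mat3 a' b' c' 0 e' f' 0 h k)"
proof -
  obtain p q r s where pqrs: "in_O p" "in_O q" "in_O r" "in_O s" "unit_O (p * s - q * r)" "r * a + s * d = 0"
    by (rule valuation_ring_row_elimination)
  then have "mat3 p q 0 r s 0 0 0 1 \<in> GL3O"
    by (intro mat3_in_GL3O) auto
  then have "same_dcoset (mat3 a b c d e f 0 h k) (mat3 p q 0 r s 0 0 0 1 * mat3 a b c d e f 0 h k)"
    by (rule same_dcoset_mult_left[OF mat3_carrier])
  then show ?thesis
    using pqrs(6) by (simp add: mat3_mult) blast
qed

lemma same_dcoset_clear_21: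
  "\<exists>e' f' k'. same_dcoset (mat3 a b c 0 e f 0 h k) (mat3 a b c 0 e' f' 0 0 k')"
proof -
  obtain p q r s where pqrs: "in_O p" "in_O q" "in_O r" "in_O s" "unit_O (p * s - q * r)" "r * e + s * h = 0"
    by (rule valuation_ring_row_elimination)
  then have "mat3 1 0 0 0 p q 0 r s \<in> GL3O"
    by (intro mat3_in_GL3O) auto
  then have "same_dcoset (mat3 a b c 0 e f 0 h k) (mat3 1 0 0 0 p q 0 r s * mat3 a b c 0 e f 0 h k)"
    by (rule same_dcoset_mult_left[OF mat3_carrier])
  then show ?thesis
    using pqrs(6) by (simp add: mat3_mult) blast
qed

lemma same_dcoset_upper_triangular:
  assumes "A \<in> carrier_mat 3 3"
  shows "\<exists>a b c e f k. same_dcoset A (mat3 a b c 0 e f 0 0 k)"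
proof -
  obtain a b c d e f g h k where A: "A = mat3 a b c d e f g h k"
    using assms by (rule carrier_mat_3_3E)
  obtain d1 e1 f1 h1 k1 where 1: "same_dcoset A (mat3 a b c d1 e1 f1 0 h1 k1)"
    using same_dcoset_clear_20 unfolding A by blast
  obtain a2 b2 c2 e2 f2 where "same_dcoset (mat3 a b c d1 e1 f1 0 h1 k1) (mat3 a2 b2 c2 0 e2 f2 0 h1 k1)"
    using same_dcoset_clear_10 by blast
  with 1 have 2: "same_dcoset A (mat3 a2 b2 c2 0 e2 f2 0 h1 k1)"
    using assms by (blast intro: same_dcoset_trans)
  obtain e3 f3 k3 where "same_dcoset (mat3 a2 b2 c2 0 e2 f2 0 h1 k1) (mat3 a2 b2 c2 0 e3 f3 0 0 k3)"
    using same_dcoset_clear_21 by blast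
  with 2 show ?thesis
    using assms by (blast intro: same_dcoset_trans)
qed

lemma det_nonzero_if_GL3K: "A \<in> GL3K \<Longrightarrow> det A \<noteq> 0"
proof -
  assume "A \<in> GL3K"
  then obtain B where A: "A \<in> carrier_mat 3 3" and B: "A * B = 1\<^sub>m 3" "B * A = 1\<^sub>m (dim_row B)"
    unfolding GL3K_def invertible_mat_def inverts_mat_def by auto
  have "dim_col B = 3" "dim_row B = 3"
    using arg_cong[OF B(1), of dim_col] arg_cong[OF B(2), of dim_col] A by auto
  then have "B \<in> carrier_mat 3 3"
    by auto
  with A show "det A \<noteq> 0"
    using B(1) by (rule det_nonzero_if_right_inverse)
qed

definition unitri :: "complex fls \<Rightarrow> complex fls \<Rightarrow> complex fls \<Rightarrow> complex fls mat" where
  "unitri a b c = mat3 1 a c 0 1 b 0 0 1"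

lemma GL3K_same_dcoset_unitri:
  assumes "A \<in> GL3K"
  shows "\<exists>a b c. same_dcoset A (unitri a b c)"
proof -
  have A: "A \<in> carrier_mat 3 3"
    using assms by (simp add: GL3K_def)
  then obtain a b c e f k where U: "same_dcoset A (mat3 a b c 0 e f 0 0 k)"
    using same_dcoset_upper_triangular by blast
  then have "a * e * k \<noteq> 0"
    using same_dcoset_det_nonzero[OF A det_nonzero_if_GL3K[OF assms] U]
    by (simp add: det_mat3_upper_triangular)
  then have "mat3 (1 / a) 0 0 0 (1 / e) 0 0 0 (1 / k) \<in> Diag3K"
    by (simp add: mat3_diag_in_Diag3K)
  then have "same_dcoset (mat3 a b c 0 e f 0 0 k)
      (mat3 a b c 0 e f 0 0 k * mat3 (1 / a) 0 0 0 (1 / e) 0 0 0 (1 / k))"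
    by (rule same_dcoset_mult_right[OF mat3_carrier])
  moreover have "mat3 a b c 0 e f 0 0 k * mat3 (1 / a) 0 0 0 (1 / e) 0 0 0 (1 / k) = unitri (b / e) (f / k) (c / k)"
    using \<open>a * e * k \<noteq> 0\<close> by (simp add: mat3_mult unitri_def)
  ultimately show ?thesis
    using U A by (metis same_dcoset_trans)
qed

lemma GL3O_upper_triangular_diag_units:
  assumes "mat3 g0 u v 0 g1 w 0 0 g2 \<in> GL3O"
  shows "unit_O g0 \<and> unit_O g1 \<and> unit_O g2"
proof -
  obtain H where G: "O_entries (mat3 g0 u v 0 g1 w 0 0 g2)"
    and H: "H \<in> carrier_mat 3 3" "O_entries H"
      "mat3 g0 u v 0 g1 w 0 0 g2 * H = 1\<^sub>m 3" "H * mat3 g0 u v 0 g1 w 0 0 g2 = 1\<^sub>m 3"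
    using assms unfolding GL3O_iff by auto
  obtain h00 h01 h02 h10 h11 h12 h20 h21 h22 where H_entries: "H = mat3 h00 h01 h02 h10 h11 h12 h20 h21 h22"
    using H(1) by (rule carrier_mat_3_3E)
  have "h00 * g0 = 1" "h10 * g0 = 0" "h10 * u + h11 * g1 = 1" "g2 * h22 = 1"
    using H(3,4) unfolding H_entries mat3_mult one_mat_3 mat3_eq_iff by simp_all
  then have "g0 * h00 = 1" "g1 * h11 = 1" "g2 * h22 = 1"
    by (auto simp: mult.commute)
  then show ?thesis
    using G H(2) unfolding H_entries by (auto intro: unit_O_if_mult_eq_1)
qed

text \<open>If G * unitri a b c * D = unitri a' b' c' with G in GL(3,O) and D diagonal, then G is
  upper triangular with unit diagonal (d0, d1, d2) and D = diag(1/d0, 1/d1, 1/d2); the three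
  conditions below say that the entries of G above the diagonal lie in O.\<close>

lemma same_dcoset_unitri_imp_units:
  assumes "same_dcoset (unitri a b c) (unitri a' b' c')"
  shows "\<exists>d0 d1 d2. unit_O d0 \<and> unit_O d1 \<and> unit_O d2 \<and>
    in_O (a' * d1 - a * d0) \<and> in_O (b' * d2 - b * d1) \<and> in_O (c' * d2 - (a' * d1 - a * d0) * b - c * d0)"
proof -
  obtain G D where GD: "G \<in> GL3O" "D \<in> Diag3K" "unitri a' b' c' = G * unitri a b c * D"
    using assms unfolding same_dcoset_def by auto
  obtain x y z where D: "x \<noteq> 0" "y \<noteq> 0" "z \<noteq> 0" "D = mat3 x 0 0 0 y 0 0 0 z"
    using GD(2) unfolding Diag3K_iff by auto
  obtain g00 g01 g02 g10 g11 g12 g20 g21 g22 where G: "G = mat3 g00 g01 g02 g10 g11 g12 g20 g21 g22"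
    using GL3O_carrier[OF GD(1)] by (rule carrier_mat_3_3E)
  have eqs: "g00 * x = 1" "(g00 * a + g01) * y = a'" "(g00 * c + g01 * b + g02) * z = c'"
    "g10 * x = 0" "(g10 * a + g11) * y = 1" "(g10 * c + g11 * b + g12) * z = b'"
    "g20 * x = 0" "(g20 * a + g21) * y = 0" "(g20 * c + g21 * b + g22) * z = 1"
    using GD(3) unfolding G D(4) unitri_def mat3_mult mat3_eq_iff by (simp_all add: algebra_simps)
  then have "g10 = 0" "g20 = 0" "g21 = 0"
    using D by auto
  then have units: "unit_O g00 \<and> unit_O g11 \<and> unit_O g22"
    using GD(1) unfolding G by (intro GL3O_upper_triangular_diag_units) simp
  have G_O: "in_O g01" "in_O g02" "in_O g12"
    using GD(1) unfolding G GL3O_iff by simp_all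
  have "g11 * y = 1" "g22 * z = 1"
    using eqs \<open>g10 = 0\<close> \<open>g20 = 0\<close> \<open>g21 = 0\<close> by (simp_all add: mult.commute)
  then have "a' * g11 - a * g00 = g01" "b' * g22 - b * g11 = g12"
    "c' * g22 - (a' * g11 - a * g00) * b - c * g00 = g02"
    using \<open>g10 = 0\<close> by (auto simp flip: eqs(2,3,6) simp: algebra_simps)
  then show ?thesis
    using units G_O by metis
qed

lemma same_dcoset_unitri_if_units:
  assumes "unit_O d0" "unit_O d1" "unit_O d2"
    and "in_O (a' * d1 - a * d0)" "in_O (b' * d2 - b * d1)" "in_O (c' * d2 - (a' * d1 - a * d0) * b - c * d0)"
  shows "same_dcoset (unitri a b c) (unitri a' b' c')"
proof -
  have nonzero: "d0 \<noteq> 0" "d1 \<noteq> 0" "d2 \<noteq> 0"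
    using assms(1-3) by (simp_all add: unit_O_imp_nonzero)
  define G where "G = mat3 d0 (a' * d1 - a * d0) (c' * d2 - (a' * d1 - a * d0) * b - c * d0)
    0 d1 (b' * d2 - b * d1) 0 0 d2"
  have "unit_O (d0 * (d1 * d2))"
    using assms(1-3) by auto
  then have "G \<in> GL3O"
    unfolding G_def using assms by (intro mat3_in_GL3O) (auto simp: unit_O_imp_in_O)
  moreover have "mat3 (1 / d0) 0 0 0 (1 / d1) 0 0 0 (1 / d2) \<in> Diag3K"
    using nonzero by (simp add: mat3_diag_in_Diag3K)
  moreover have "unitri a' b' c' = G * unitri a b c * mat3 (1 / d0) 0 0 0 (1 / d1) 0 0 0 (1 / d2)"
    unfolding G_def unitri_def mat3_mult mat3_eq_iff using nonzero by (simp add: field_simps)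
  ultimately show ?thesis
    unfolding same_dcoset_def by blast
qed

lemma T_eq_unitri: "T i j q = unitri (fls_X_inv ^ i) (fls_X_inv ^ j) (eval_tinv q)"
  by (simp add: T_def unitri_def mat3_def)

lemma unitri_same_dcoset_T: "\<exists>i j q. in_tCt q \<and> same_dcoset (unitri a b c) (T i j q)"
proof -
  obtain i u where u: "unit_O u" "in_O (fls_X_inv ^ i * u - a)"
    using exists_X_inv_power_times_unit_mod_O by blast
  obtain j v where v: "unit_O v" "in_O (fls_X_inv ^ j * v - b)"
    using exists_X_inv_power_times_unit_mod_O by blast
  define s where "s = ((fls_X_inv ^ i - a / u) * b + c / u) / v"
  have "fls_X_inv ^ i * 1 - a * (1 / u) = (fls_X_inv ^ i * u - a) / u"
    using unit_O_imp_nonzero[OF u(1)] by (simp add: field_simps)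
  then have cond_a: "in_O (fls_X_inv ^ i * 1 - a * (1 / u))"
    using u by auto
  have "eval_tinv (fls_prpart s) * v - (fls_X_inv ^ i * 1 - a * (1 / u)) * b - c * (1 / u)
      = - ((s - principal_part s) * v)"
    using unit_O_imp_nonzero[OF v(1)] by (simp add: s_def principal_part_def field_simps)
  then have cond_c: "in_O (eval_tinv (fls_prpart s) * v - (fls_X_inv ^ i * 1 - a * (1 / u)) * b - c * (1 / u))"
    using in_O_diff_principal_part v(1) by (simp add: in_O_mult_unit_iff)
  have "same_dcoset (unitri a b c) (T i j (fls_prpart s))"
    unfolding T_eq_unitri using u(1) v cond_a cond_c
    by (intro same_dcoset_unitri_if_units[of "1 / u" 1 v]) auto
  then show ?thesis
    using in_tCt_fls_prpart by blast
qed

lemma same_dcoset_T_imp_indices_eq: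
  assumes "same_dcoset (T i j q1) (T k l q2)"
  shows "i = k \<and> j = l"
proof -
  obtain d0 d1 d2 where "unit_O d0" "unit_O d1" "unit_O d2"
    "in_O (fls_X_inv ^ k * d1 - fls_X_inv ^ i * d0)" "in_O (fls_X_inv ^ l * d2 - fls_X_inv ^ j * d1)"
    using same_dcoset_unitri_imp_units[OF assms[unfolded T_eq_unitri]] by blast
  then show ?thesis
    using X_inv_power_times_unit_mod_O_unique by metis
qed

lemma same_dcoset_T_iff:
  assumes "in_tCt q2"
  shows "same_dcoset (T i j q1) (T i j q2) \<longleftrightarrow>
    (\<exists>y1 y2. unit_O y1 \<and> unit_O y2 \<and> cong_O y2 1 j \<and> cong_O y2 y1 i \<and>
      eval_tinv q2 = principal_part (y1 * eval_tinv q1 + (y2 - y1) * fls_X_inv ^ (i + j)))"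
  (is "_ \<longleftrightarrow> (\<exists>y1 y2. ?P y1 y2)")
proof -
  let ?x = "fls_X_inv :: complex fls"
  have P_iff: "?P y1 y2 \<longleftrightarrow> unit_O y1 \<and> unit_O y2 \<and> in_O (?x ^ j * (y2 - 1)) \<and>
      in_O (?x ^ i * (y2 - y1)) \<and> in_O (eval_tinv q2 - (y1 * eval_tinv q1 + (y2 - y1) * ?x ^ (i + j)))"
    for y1 y2
    by (simp add: cong_O_iff eval_tinv_eq_principal_part_iff[OF assms])
  show ?thesis
  proof
    assume "same_dcoset (T i j q1) (T i j q2)"
    then obtain d0 d1 d2 where d: "unit_O d0" "unit_O d1" "unit_O d2"
      "in_O (?x ^ i * d1 - ?x ^ i * d0)" "in_O (?x ^ j * d2 - ?x ^ j * d1)"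
      "in_O (eval_tinv q2 * d2 - (?x ^ i * d1 - ?x ^ i * d0) * ?x ^ j - eval_tinv q1 * d0)"
      using same_dcoset_unitri_imp_units[of _ _ _ _ _ "eval_tinv q2"] unfolding T_eq_unitri by blast
    have "d2 \<noteq> 0"
      using d(3) by (rule unit_O_imp_nonzero)
    then have "?x ^ j * (d1 / d2 - 1) = - ((?x ^ j * d2 - ?x ^ j * d1) / d2)"
      "?x ^ i * (d1 / d2 - d0 / d2) = (?x ^ i * d1 - ?x ^ i * d0) / d2"
      "eval_tinv q2 - (d0 / d2 * eval_tinv q1 + (d1 / d2 - d0 / d2) * ?x ^ (i + j))
        = (eval_tinv q2 * d2 - (?x ^ i * d1 - ?x ^ i * d0) * ?x ^ j - eval_tinv q1 * d0) / d2"
      by (simp_all add: field_simps power_add)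
    then have "?P (d0 / d2) (d1 / d2)"
      unfolding P_iff using d by auto
    then show "\<exists>y1 y2. ?P y1 y2"
      by blast
  next
    assume "\<exists>y1 y2. ?P y1 y2"
    then obtain y1 y2 where y: "unit_O y1" "unit_O y2" "in_O (?x ^ j * (y2 - 1))"
      "in_O (?x ^ i * (y2 - y1))" "in_O (eval_tinv q2 - (y1 * eval_tinv q1 + (y2 - y1) * ?x ^ (i + j)))"
      unfolding P_iff by blast
    have eqs: "?x ^ i * y2 - ?x ^ i * y1 = ?x ^ i * (y2 - y1)"
      "?x ^ j * 1 - ?x ^ j * y2 = - (?x ^ j * (y2 - 1))"
      "eval_tinv q2 * 1 - ?x ^ i * (y2 - y1) * ?x ^ j - eval_tinv q1 * y1
        = eval_tinv q2 - (y1 * eval_tinv q1 + (y2 - y1) * ?x ^ (i + j))"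
      by (simp_all add: algebra_simps power_add)
    have "in_O (?x ^ i * y2 - ?x ^ i * y1)" "in_O (?x ^ j * 1 - ?x ^ j * y2)"
      "in_O (eval_tinv q2 * 1 - (?x ^ i * y2 - ?x ^ i * y1) * ?x ^ j - eval_tinv q1 * y1)"
      unfolding eqs using y(3-5) by simp_all
    then show "same_dcoset (T i j q1) (T i j q2)"
      unfolding T_eq_unitri by (rule same_dcoset_unitri_if_units[OF y(1,2) unit_O_1])
  qed
qed

theorem mainTheorem11:
  shows "(\<forall>A\<in>GL3K. \<exists>i j q. in_tCt q \<and> same_dcoset A (T i j q))
   \<and> (\<forall>i j k l q1 q2. in_tCt q1 \<longrightarrow> in_tCt q2 \<longrightarrow>
        same_dcoset (T i j q1) (T k l q2) \<longrightarrow> i = k \<and> j = l)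
   \<and> (\<forall>i j q1 q2. in_tCt q1 \<longrightarrow> in_tCt q2 \<longrightarrow>
        (same_dcoset (T i j q1) (T i j q2) \<longleftrightarrow>
          (\<exists>y1 y2. unit_O y1 \<and> unit_O y2 \<and> cong_O y2 1 j \<and> cong_O y2 y1 i \<and>
             eval_tinv q2 = principal_part
               (y1 * eval_tinv q1 + (y2 - y1) * fls_X_inv ^ (i + j)))))"
proof (intro conjI ballI allI impI)
  fix A assume "A \<in> GL3K"
  then obtain a b c where "same_dcoset A (unitri a b c)"
    using GL3K_same_dcoset_unitri by blast
  moreover obtain i j q where "in_tCt q" "same_dcoset (unitri a b c) (T i j q)"
    using unitri_same_dcoset_T by blast
  moreover have "A \<in> carrier_mat 3 3"
    using \<open>A \<in> GL3K\<close> by (simp add: GL3K_def)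
  ultimately show "\<exists>i j q. in_tCt q \<and> same_dcoset A (T i j q)"
    using same_dcoset_trans by blast
qed (simp_all add: same_dcoset_T_imp_indices_eq same_dcoset_T_iff)

end
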